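(* Let $E$ be a real topological vector space, $\Omega$ a nonempty open subset of $E$, and $f_0,\dots,f_m:\Omega\to\mathbb{R}$. Let $\hat{x}$ be a solution of the problem $(\mathcal{P}_1)$: maximize $f_0(x)$ subject to $x\in\Omega$ and $f_i(x)\ge0$ for all $i\in\{1,\dots,m\}$. Assume that $f_j$ is lower semicontinuous at $\hat{x}$ for every $j\in\{1,\dots,m\}$ with $f_j(\hat{x})>0$, that each $f_i$ ($0\le i\le m$) is $D^-_M$-differentiable at $\hat{x}$, and that, after reindexing, $\{i\in\{1,\dots,m\}:f_i(\hat{x})=0\}=\{1,\dots,l\}$ with $l\ge1$. For $p\in\{0,\dots,l\}$ let $A_p=\{u\in E: D^-_Mf_i(\hat{x})(u)>0\ \text{for all } i\in\{p,\dots,l\}\}$, assume $A_l\ne\emptyset$, and let $k:=\min\{i\in\{0,\dots,l\}:A_i\neq\emptyset\}$ (so that $k\ge1$). Then for every $v\in E$ with $D^-_Mf_i(\hat{x})(v)\ge0$ for all $i\in\{k,\dots,l\}$, one has $D^-_Mf_{k-1}(\hat{x})(v)\le0$.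
   Context: $D^-f(x)(u):=\liminf_{t\to0^+}\frac{f(x+tu)-f(x)}{t}$ (with $D^-f(x)(0)=0$); $D^-_Mf(x)(u):=\inf_{w\in E}\{D^-f(x)(u+w)-D^-f(x)(w)\}$; $f$ is $D^-_M$-differentiable at $x$ if both are finite for every $u\in E$. *)

theory Defs
  imports "HOL-Analysis.Analysis"
begin

class real_tvs = real_vector + topological_ab_group_add +
  assumes continuous_scaleR_tvs:
    "((\<lambda>p. fst p *\<^sub>R snd p) \<longlongrightarrow> c *\<^sub>R x) (nhds c \<times>\<^sub>F nhds x)"

definition lower_dini :: "('a::real_vector \<Rightarrow> real) \<Rightarrow> 'a \<Rightarrow> 'a \<Rightarrow> ereal" where
  "lower_dini f x u =
     (if u = 0 then 0
      else Liminf (at_right 0) (\<lambda>t::real. ereal ((f (x + t *\<^sub>R u) - f x) / t)))"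

definition lower_dini_MP :: "('a::real_vector \<Rightarrow> real) \<Rightarrow> 'a \<Rightarrow> 'a \<Rightarrow> ereal" where
  "lower_dini_MP f x u = (INF w. lower_dini f x (u + w) - lower_dini f x w)"

definition DM_differentiable :: "('a::real_vector \<Rightarrow> real) \<Rightarrow> 'a \<Rightarrow> bool" where
  "DM_differentiable f x \<longleftrightarrow>
     (\<forall>u. \<bar>lower_dini f x u\<bar> \<noteq> \<infinity> \<and> \<bar>lower_dini_MP f x u\<bar> \<noteq> \<infinity>)"

definition lsc_at :: "('a::topological_space \<Rightarrow> real) \<Rightarrow> 'a \<Rightarrow> bool" where
  "lsc_at f x \<longleftrightarrow> (\<forall>c < f x. \<forall>\<^sub>F y in nhds x. c < f y)"

end

theory Submission
  imports Defs
begin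

text \<open>
  Superadditivity of \<open>D\<^sup>-\<^sub>M f(x\<^sub>h)\<close> does all the work. First, \<open>A\<^sub>0 = {}\<close>: along a direction
  in \<open>A\<^sub>0\<close> the objective and all active constraints increase strictly, while the inactive
  constraints stay positive by lower semicontinuity, contradicting optimality of \<open>x\<^sub>h\<close>.
  Hence \<open>k \<ge> 1\<close>. Second, if \<open>u \<in> A\<^sub>k\<close> and \<open>v\<close> had \<open>D\<^sup>-\<^sub>M f\<^sub>i(x\<^sub>h)(v) \<ge> 0\<close> for \<open>i \<ge> k\<close> but
  \<open>D\<^sup>-\<^sub>M f\<^sub>k\<^sub>-\<^sub>1(x\<^sub>h)(v) > 0\<close>, then superadditivity puts \<open>n v + u\<close> into \<open>A\<^sub>k\<^sub>-\<^sub>1\<close> for large \<open>n\<close>,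
  contradicting the minimality of \<open>k\<close>.
\<close>

lemma lower_dini_MP_le_lower_dini: "lower_dini_MP f x u \<le> lower_dini f x u"
proof -
  have "lower_dini_MP f x u \<le> lower_dini f x (u + 0) - lower_dini f x 0"
    unfolding lower_dini_MP_def by (rule INF_lower) simp
  then show ?thesis by (simp add: lower_dini_def)
qed

lemma lower_dini_MP_superadd:
  assumes "\<forall>u. \<bar>lower_dini f x u\<bar> \<noteq> \<infinity>"
  shows "lower_dini_MP f x a + lower_dini_MP f x b \<le> lower_dini_MP f x (a + b)"
  unfolding lower_dini_MP_def[of f x "a + b"]
proof (rule INF_greatest)
  fix w
  have "lower_dini_MP f x a + lower_dini_MP f x b \<le>
      (lower_dini f x (a + (b + w)) - lower_dini f x (b + w)) +
      (lower_dini f x (b + w) - lower_dini f x w)"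
    unfolding lower_dini_MP_def by (intro add_mono INF_lower) simp_all
  also have "\<dots> = lower_dini f x (a + b + w) - lower_dini f x w"
  proof -
    obtain p q r where "lower_dini f x (a + (b + w)) = ereal p" "lower_dini f x (b + w) = ereal q"
        "lower_dini f x w = ereal r"
      using assms by (metis ereal_real')
    then show ?thesis by (simp add: add.assoc)
  qed
  finally show "lower_dini_MP f x a + lower_dini_MP f x b
      \<le> lower_dini f x (a + b + w) - lower_dini f x w" .
qed

lemma lower_dini_MP_nat_scaleR_add_ge:
  fixes n :: nat
  assumes "DM_differentiable f x"
  shows "ereal (real n) * lower_dini_MP f x v + lower_dini_MP f x u
    \<le> lower_dini_MP f x (real n *\<^sub>R v + u)"
proof (induction n)
  case 0
  show ?case by (simp flip: zero_ereal_def)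
next
  case (Suc n)
  have fin: "\<forall>u. \<bar>lower_dini f x u\<bar> \<noteq> \<infinity>" "\<bar>lower_dini_MP f x v\<bar> \<noteq> \<infinity>"
    using assms unfolding DM_differentiable_def by auto
  have "ereal (real (Suc n)) * lower_dini_MP f x v + lower_dini_MP f x u
      = lower_dini_MP f x v + (ereal (real n) * lower_dini_MP f x v + lower_dini_MP f x u)"
    using fin(2) by (cases "lower_dini_MP f x v"; cases "lower_dini_MP f x u")
      (simp_all add: algebra_simps)
  also have "\<dots> \<le> lower_dini_MP f x v + lower_dini_MP f x (real n *\<^sub>R v + u)"
    using Suc.IH by (rule add_left_mono)
  also have "\<dots> \<le> lower_dini_MP f x (v + (real n *\<^sub>R v + u))"
    using fin(1) by (rule lower_dini_MP_superadd)
  also have "v + (real n *\<^sub>R v + u) = real (Suc n) *\<^sub>R v + u"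
    by (simp add: algebra_simps)
  finally show ?case .
qed

lemma lower_dini_MP_common_positive_direction:
  assumes diff: "\<forall>i\<in>insert j I. DM_differentiable (f i) x"
    and v: "0 < lower_dini_MP (f j) x v" "\<forall>i\<in>I. 0 \<le> lower_dini_MP (f i) x v"
    and u: "\<forall>i\<in>I. 0 < lower_dini_MP (f i) x u"
  shows "\<exists>w. \<forall>i\<in>insert j I. 0 < lower_dini_MP (f i) x w"
proof -
  obtain a b where ab: "lower_dini_MP (f j) x v = ereal a" "lower_dini_MP (f j) x u = ereal b"
    using diff unfolding DM_differentiable_def by (metis ereal_real' insertI1)
  then have "0 < a" using v(1) by simp
  then obtain n where n: "- b < real n * a"
    using ex_less_of_nat_mult by blast
  have "0 < ereal (real n) * lower_dini_MP (f j) x v + lower_dini_MP (f j) x u"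
    using n ab by simp
  also have "\<dots> \<le> lower_dini_MP (f j) x (real n *\<^sub>R v + u)"
    using diff by (simp add: lower_dini_MP_nat_scaleR_add_ge)
  finally have "0 < lower_dini_MP (f j) x (real n *\<^sub>R v + u)" .
  moreover have "0 < lower_dini_MP (f i) x (real n *\<^sub>R v + u)" if "i \<in> I" for i
  proof -
    have "0 < ereal (real n) * lower_dini_MP (f i) x v + lower_dini_MP (f i) x u"
      using v(2) u that by (simp add: add_nonneg_pos)
    also have "\<dots> \<le> lower_dini_MP (f i) x (real n *\<^sub>R v + u)"
      using diff that by (simp add: lower_dini_MP_nat_scaleR_add_ge)
    finally show ?thesis .
  qed
  ultimately show ?thesis by blast
qed

lemma tendsto_ray_at_right:
  fixes x u :: "'a::real_tvs"
  shows "((\<lambda>t::real. x + t *\<^sub>R u) \<longlongrightarrow> x) (at_right 0)"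
proof -
  have "filterlim (\<lambda>t::real. (t, u)) (nhds 0 \<times>\<^sub>F nhds u) (at_right 0)"
    unfolding nhds_prod[symmetric] by (intro tendsto_Pair tendsto_ident_at tendsto_const)
  from filterlim_compose[OF continuous_scaleR_tvs[of 0 u] this]
  have "((\<lambda>t::real. t *\<^sub>R u) \<longlongrightarrow> 0) (at_right 0)" by simp
  then show ?thesis
    using tendsto_add[OF tendsto_const[of x]] by fastforce
qed

lemma eventually_less_along_ray_if_lower_dini_pos:
  assumes "0 < lower_dini f x u"
  shows "\<forall>\<^sub>F t in at_right 0. f x < f (x + t *\<^sub>R u)"
proof -
  have "u \<noteq> 0" using assms by (auto simp: lower_dini_def)
  with assms have "0 < Liminf (at_right 0) (\<lambda>t::real. ereal ((f (x + t *\<^sub>R u) - f x) / t))"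
    by (simp add: lower_dini_def)
  then have "\<forall>\<^sub>F t in at_right 0. 0 < (f (x + t *\<^sub>R u) - f x) / t"
    using less_LiminfD by fastforce
  moreover have "\<forall>\<^sub>F t in at_right (0::real). 0 < t" by (simp add: eventually_at_right_less)
  ultimately show ?thesis
    by eventually_elim (simp add: zero_less_divide_iff)
qed

lemma eventually_less_along_ray_if_lsc:
  fixes f :: "'a::real_tvs \<Rightarrow> real"
  assumes "lsc_at f x" "c < f x"
  shows "\<forall>\<^sub>F t in at_right 0. c < f (x + t *\<^sub>R u)"
proof -
  have "\<forall>\<^sub>F y in nhds x. c < f y" using assms unfolding lsc_at_def by blast
  then show ?thesis using eventually_compose_filterlim tendsto_ray_at_right by blast
qed

lemma no_common_ascent_direction:
  fixes f :: "nat \<Rightarrow> 'a::real_tvs \<Rightarrow> real"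
  assumes "open \<Omega>" "xh \<in> \<Omega>"
    and feas: "\<forall>i\<in>{1..m}. f i xh \<ge> 0"
    and opt: "\<forall>x\<in>\<Omega>. (\<forall>i\<in>{1..m}. f i x \<ge> 0) \<longrightarrow> f 0 x \<le> f 0 xh"
    and lsc: "\<forall>j\<in>{1..m}. f j xh > 0 \<longrightarrow> lsc_at (f j) xh"
  shows "\<exists>i\<in>insert 0 {i\<in>{1..m}. f i xh = 0}. lower_dini (f i) xh u \<le> 0"
proof (rule ccontr)
  assume "\<not> ?thesis"
  then have ascent: "0 < lower_dini (f i) xh u" if "i = 0 \<or> i \<in> {1..m} \<and> f i xh = 0" for i
    using that by auto
  have "\<forall>\<^sub>F t in at_right 0. 0 \<le> f i (xh + t *\<^sub>R u)" if i: "i \<in> {1..m}" for i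
  proof (cases "f i xh = 0")
    case True
    with i have "\<forall>\<^sub>F t in at_right 0. f i xh < f i (xh + t *\<^sub>R u)"
      by (intro eventually_less_along_ray_if_lower_dini_pos ascent) simp
    then show ?thesis using True by (auto elim: eventually_mono)
  next
    case False
    then have "0 < f i xh" using feas i by force
    have "lsc_at (f i) xh" using lsc i \<open>0 < f i xh\<close> by blast
    from eventually_less_along_ray_if_lsc[where u=u, OF this \<open>0 < f i xh\<close>]
    show ?thesis by (auto elim: eventually_mono)
  qed
  then have "\<forall>\<^sub>F t in at_right 0. \<forall>i\<in>{1..m}. 0 \<le> f i (xh + t *\<^sub>R u)"
    by (simp add: eventually_ball_finite_distrib)
  moreover have "\<forall>\<^sub>F t in at_right 0. xh + t *\<^sub>R u \<in> \<Omega>"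
    using tendsto_ray_at_right \<open>open \<Omega>\<close> \<open>xh \<in> \<Omega>\<close> by (rule topological_tendstoD)
  moreover have "\<forall>\<^sub>F t in at_right 0. f 0 xh < f 0 (xh + t *\<^sub>R u)"
    using ascent by (simp add: eventually_less_along_ray_if_lower_dini_pos)
  ultimately have "\<forall>\<^sub>F t in at_right (0::real). False"
    by eventually_elim (use opt in fastforce)
  then show False by simp
qed

theorem lemma3p8:
  fixes f :: "nat \<Rightarrow> 'a::real_tvs \<Rightarrow> real"
    and \<Omega> :: "'a set" and xh :: 'a and m l :: nat
  assumes "open \<Omega>" and "\<Omega> \<noteq> {}"
    and feas: "xh \<in> \<Omega>" "\<forall>i\<in>{1..m}. f i xh \<ge> 0"
    and opt: "\<forall>x\<in>\<Omega>. (\<forall>i\<in>{1..m}. f i x \<ge> 0) \<longrightarrow> f 0 x \<le> f 0 xh"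
    and lsc: "\<forall>j\<in>{1..m}. f j xh > 0 \<longrightarrow> lsc_at (f j) xh"
    and diff: "\<forall>i\<in>{0..m}. DM_differentiable (f i) xh"
    and active: "{i\<in>{1..m}. f i xh = 0} = {1..l}" and "l \<ge> 1"
    and A_def: "\<forall>p. A p = {u. \<forall>i\<in>{p..l}. lower_dini_MP (f i) xh u > 0}"
    and "A l \<noteq> {}"
    and k_def: "k = (LEAST i. i \<le> l \<and> A i \<noteq> {})"
  shows "k \<ge> 1 \<and>
    (\<forall>v. (\<forall>i\<in>{k..l}. lower_dini_MP (f i) xh v \<ge> 0) \<longrightarrow> lower_dini_MP (f (k - 1)) xh v \<le> 0)"
proof -
  have "l \<in> {i\<in>{1..m}. f i xh = 0}" unfolding active using \<open>l \<ge> 1\<close> by simp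
  then have "l \<le> m" by simp
  then have diff_active: "\<forall>i\<in>{0..l}. DM_differentiable (f i) xh" using diff by auto
  have k: "k \<le> l" "A k \<noteq> {}"
    using LeastI[of "\<lambda>i. i \<le> l \<and> A i \<noteq> {}" l] \<open>A l \<noteq> {}\<close> unfolding k_def by auto
  have "A 0 = {}"
  proof (rule equals0I)
    fix u assume "u \<in> A 0"
    then have "\<forall>i\<in>{0..l}. 0 < lower_dini (f i) xh u"
      using A_def lower_dini_MP_le_lower_dini order_less_le_trans by blast
    moreover have "insert 0 {i\<in>{1..m}. f i xh = 0} = {0..l}" unfolding active by auto
    ultimately show False
      using no_common_ascent_direction[OF \<open>open \<Omega>\<close> feas opt lsc, of u] by force
  qed
  with k have "k \<ge> 1" by (cases k) auto
  moreover have "lower_dini_MP (f (k - 1)) xh v \<le> 0"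
    if v: "\<forall>i\<in>{k..l}. lower_dini_MP (f i) xh v \<ge> 0" for v
  proof (rule ccontr)
    assume "\<not> lower_dini_MP (f (k - 1)) xh v \<le> 0"
    then have "0 < lower_dini_MP (f (k - 1)) xh v" by simp
    moreover obtain u where "u \<in> A k" using k by blast
    moreover have "\<forall>i\<in>insert (k - 1) {k..l}. DM_differentiable (f i) xh"
      using diff_active k by auto
    ultimately have "\<exists>w. \<forall>i\<in>insert (k - 1) {k..l}. 0 < lower_dini_MP (f i) xh w"
      using v A_def by (intro lower_dini_MP_common_positive_direction) auto
    moreover have "insert (k - 1) {k..l} = {k - 1..l}" using \<open>k \<ge> 1\<close> k by auto
    ultimately obtain w where "\<forall>i\<in>{k - 1..l}. 0 < lower_dini_MP (f i) xh w" by metis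
    then have "A (k - 1) \<noteq> {}" using A_def by auto
    then show False
      using not_less_Least[of "k - 1" "\<lambda>i. i \<le> l \<and> A i \<noteq> {}"] k \<open>k \<ge> 1\<close>
      unfolding k_def by fastforce
  qed
  ultimately show ?thesis by blast
qed

end
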